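(* For $d$RGP-UCB (single or multiple play), at any round $t\in\{1,d+1,2d+1,\dots\}$ at which a lookahead block starts and leaf $I_t$ is selected, $$\mathbb E\big[M^*(\mathbf Z_t)-M_{I_t}(\mathbf Z_t)\,\big|\,\mathcal F_{t-1}\big]\le\frac{\sqrt{2d\pi}}{(t+d-1)^2}+\alpha_t\varsigma_t(I_t).$$
   Context: Recovering bandits model: $K$ arms, $\mathcal Z=\{0,\dots,z_{\max}\}$; recovery functions $f_1,\dots,f_K:\mathcal Z\to\mathbb R$ drawn independently from a zero-mean GP with known kernel $k$, $k(z,z)\le1$. State $\mathbf Z_t\in\mathcal Z^K$; playing $J_t$ sets $Z_{J_t,t+1}=0$ and $Z_{j,t+1}=\min\{z_{\max},Z_{j,t}+1\}$ for $j\ne J_t$; observation $Y_t=f_{J_t}(Z_{J_t,t})+\epsilon_t$, $\epsilon_t$ i.i.d. $\mathcal N(0,\sigma^2)$. $\mathcal F_{t-1}$ is the $\sigma$-field generated by the arms played, observations and states up to round $t-1$. Lookahead tree from root $\mathbf Z$: leaves $i$ are arm sequences $(j_0,\dots,j_{d-1})$ (single play: distinct arms; multiple play: any), with $z$-values $z_\ell$ obtained by the update rule; $M_i(\mathbf Z)=\sum_\ell f_{j_\ell}(z_\ell)$, $M^*(\mathbf Z)=\max_iM_i(\mathbf Z)$ over the same leaf set. Given $\mathcal F_{t-1}$, $M_i(\mathbf Z_t)\sim\mathcal N(\eta_t(i),\varsigma_t^2(i))$ with $\eta_t(i)=\sum_\ell\mu_{j_\ell}(z_\ell;N_{j_\ell}(t-1))$,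 $\varsigma_t^2(i)=\sum_{\ell,q}\mathbb I\{j_\ell=j_q\}k_{j_\ell}(z_\ell,z_q;N_{j_\ell}(t-1))$, where $\mu_j(\cdot;n)$, $k_j(\cdot,\cdot;n)$ are the GP posterior mean and covariance of $f_j$ after its $n$ observations and $N_j(t-1)$ is the number of plays of $j$ before round $t$. $d$RGP-UCB selects $I_t\in\arg\max_i\{\eta_t(i)+\alpha_t\varsigma_t(i)\}$ with $\alpha_t=\sqrt{2\log((K|\mathcal Z|)^d(t+d-1)^2)}$. *)

theory Defs
  imports "HOL-Probability.Probability"
begin

text \<open>Arms are the naturals below K, z-values the naturals up to zmax.
  A state is a function arm => z-value (only its values on arms below K matter).\<close>

definition upd :: "nat \<Rightarrow> nat \<Rightarrow> (nat \<Rightarrow> nat) \<Rightarrow> (nat \<Rightarrow> nat)" where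
  "upd zmax j Z = (\<lambda>i. if i = j then 0 else min zmax (Z i + 1))"

fun zseq :: "nat \<Rightarrow> (nat \<Rightarrow> nat) \<Rightarrow> nat list \<Rightarrow> nat list" where
  "zseq zmax Z [] = []"
| "zseq zmax Z (j # js) = Z j # zseq zmax (upd zmax j Z) js"

text \<open>Leaves of the depth-d lookahead tree (single play, sp = True: distinct arms).\<close>
definition leaves :: "bool \<Rightarrow> nat \<Rightarrow> nat \<Rightarrow> nat list set" where
  "leaves sp K d = {js. length js = d \<and> set js \<subseteq> {..<K} \<and> (sp \<longrightarrow> distinct js)}"

definition leaf_value :: "nat \<Rightarrow> (nat \<Rightarrow> nat \<Rightarrow> real) \<Rightarrow> (nat \<Rightarrow> nat) \<Rightarrow> nat list \<Rightarrow> real" where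
  "leaf_value zmax f Z js = (\<Sum>l<length js. f (js ! l) (zseq zmax Z js ! l))"

definition best_value :: "nat \<Rightarrow> nat list set \<Rightarrow> (nat \<Rightarrow> nat \<Rightarrow> real) \<Rightarrow> (nat \<Rightarrow> nat) \<Rightarrow> real" where
  "best_value zmax L f Z = Max ((\<lambda>js. leaf_value zmax f Z js) ` L)"

definition gram_inv :: "(nat \<Rightarrow> nat \<Rightarrow> real) \<Rightarrow> real \<Rightarrow> nat list \<Rightarrow> nat \<Rightarrow> nat \<Rightarrow> real" where
  "gram_inv k s2 zs = (SOME W. \<forall>a<length zs. \<forall>b<length zs.
      (\<Sum>c<length zs. (k (zs ! a) (zs ! c) + (if a = c then s2 else 0)) * W c b)
        = (if a = b then 1 else 0))"

definition post_mean :: "(nat \<Rightarrow> nat \<Rightarrow> real) \<Rightarrow> real \<Rightarrow> (nat \<times> real) list \<Rightarrow> nat \<Rightarrow> real" where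
  "post_mean k s2 obs z =
     (let zs = map fst obs; ys = map snd obs; W = gram_inv k s2 zs; n = length obs in
      \<Sum>a<n. \<Sum>b<n. k z (zs ! a) * W a b * ys ! b)"

definition post_cov :: "(nat \<Rightarrow> nat \<Rightarrow> real) \<Rightarrow> real \<Rightarrow> (nat \<times> real) list \<Rightarrow> nat \<Rightarrow> nat \<Rightarrow> real" where
  "post_cov k s2 obs z z' =
     (let zs = map fst obs; W = gram_inv k s2 zs; n = length obs in
      k z z' - (\<Sum>a<n. \<Sum>b<n. k z (zs ! a) * W a b * k (zs ! b) z'))"

text \<open>Rounds are numbered from 1; J s is the arm played and Y s the observation in round s.
  state_at zmax Z1 J n is the state at round n+1, i.e. Z_t = state_at zmax Z1 J (t-1).\<close>
primrec state_at :: "nat \<Rightarrow> (nat \<Rightarrow> nat) \<Rightarrow> (nat \<Rightarrow> nat) \<Rightarrow> nat \<Rightarrow> (nat \<Rightarrow> nat)" where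
  "state_at zmax Z1 J 0 = Z1"
| "state_at zmax Z1 J (Suc n) = upd zmax (J (Suc n)) (state_at zmax Z1 J n)"

text \<open>Observations of arm j before round t: pairs (Z_{j,s}, Y_s) for s < t with J_s = j;
  its length is N_j(t-1).\<close>
definition obs_of :: "nat \<Rightarrow> (nat \<Rightarrow> nat) \<Rightarrow> (nat \<Rightarrow> nat) \<Rightarrow> (nat \<Rightarrow> real) \<Rightarrow> nat \<Rightarrow> nat \<Rightarrow> (nat \<times> real) list" where
  "obs_of zmax Z1 J Y j t =
     map (\<lambda>s. (state_at zmax Z1 J (s - 1) j, Y s)) (filter (\<lambda>s. J s = j) [1..<t])"

definition eta :: "(nat \<Rightarrow> nat \<Rightarrow> real) \<Rightarrow> real \<Rightarrow> nat \<Rightarrow> (nat \<Rightarrow> nat) \<Rightarrow> (nat \<Rightarrow> nat) \<Rightarrow> (nat \<Rightarrow> real)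
     \<Rightarrow> nat \<Rightarrow> nat list \<Rightarrow> real" where
  "eta k s2 zmax Z1 J Y t js =
     (let zs = zseq zmax (state_at zmax Z1 J (t - 1)) js in
      \<Sum>l<length js. post_mean k s2 (obs_of zmax Z1 J Y (js ! l) t) (zs ! l))"

definition varsig2 :: "(nat \<Rightarrow> nat \<Rightarrow> real) \<Rightarrow> real \<Rightarrow> nat \<Rightarrow> (nat \<Rightarrow> nat) \<Rightarrow> (nat \<Rightarrow> nat) \<Rightarrow> (nat \<Rightarrow> real)
     \<Rightarrow> nat \<Rightarrow> nat list \<Rightarrow> real" where
  "varsig2 k s2 zmax Z1 J Y t js =
     (let zs = zseq zmax (state_at zmax Z1 J (t - 1)) js in
      \<Sum>l<length js. \<Sum>q<length js.
        (if js ! l = js ! q then post_cov k s2 (obs_of zmax Z1 J Y (js ! l) t) (zs ! l) (zs ! q) else 0))"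

definition alpha :: "nat \<Rightarrow> nat \<Rightarrow> nat \<Rightarrow> nat \<Rightarrow> real" where
  "alpha K zmax d t = sqrt (2 * ln (real ((K * (zmax + 1)) ^ d) * real ((t + d - 1) ^ 2)))"

definition ucb :: "(nat \<Rightarrow> nat \<Rightarrow> real) \<Rightarrow> real \<Rightarrow> nat \<Rightarrow> nat \<Rightarrow> nat \<Rightarrow> (nat \<Rightarrow> nat) \<Rightarrow> (nat \<Rightarrow> nat)
     \<Rightarrow> (nat \<Rightarrow> real) \<Rightarrow> nat \<Rightarrow> nat list \<Rightarrow> real" where
  "ucb k s2 K zmax d Z1 J Y t js =
     eta k s2 zmax Z1 J Y t js + alpha K zmax d t * sqrt (varsig2 k s2 zmax Z1 J Y t js)"

definition gaussian_rv :: "'a measure \<Rightarrow> ('a \<Rightarrow> real) \<Rightarrow> real \<Rightarrow> real \<Rightarrow> bool" where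
  "gaussian_rv P X m v \<longleftrightarrow> X \<in> borel_measurable P \<and> v \<ge> 0 \<and>
     (if v = 0 then (AE \<omega> in P. X \<omega> = m)
      else distributed P lborel X (\<lambda>x. ennreal (normal_density m (sqrt v) x)))"

text \<open>(F a)_{a in A} is a Gaussian vector with mean m and covariance C:
  every linear combination is Gaussian with the corresponding mean and variance.\<close>
definition gaussian_family :: "'a measure \<Rightarrow> 'i set \<Rightarrow> ('i \<Rightarrow> 'a \<Rightarrow> real) \<Rightarrow> ('i \<Rightarrow> real)
     \<Rightarrow> ('i \<Rightarrow> 'i \<Rightarrow> real) \<Rightarrow> bool" where
  "gaussian_family P A F m C \<longleftrightarrow> finite A \<and> (\<forall>c :: 'i \<Rightarrow> real.
      gaussian_rv P (\<lambda>\<omega>. \<Sum>a\<in>A. c a * F a \<omega>) (\<Sum>a\<in>A. c a * m a) (\<Sum>a\<in>A. \<Sum>b\<in>A. c a * c b * C a b))"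

end

theory Submission
  imports Defs "Jordan_Normal_Form.Determinant"
begin

text \<open>Given the history, the leaf values are jointly Gaussian: leaf \<open>i\<close> has mean
  \<open>eta i\<close> and variance \<open>varsigma\<^sup>2 i \<le> d\<^sup>2\<close>, because a posterior variance never exceeds the
  prior variance \<open>k z z \<le> 1\<close>. As the chosen leaf \<open>I\<close> maximises \<open>eta + alpha * varsigma\<close>,
  \<open>M\<^sup>* - M I \<le> (\<Sum>i. (M i - eta i - alpha * varsigma i)\<^sup>+) + (eta I + alpha * varsigma I - M I)\<close>,
  and every Gaussian excess above \<open>alpha\<close> standard deviations has expectation at most
  \<open>varsigma * exp (-alpha\<^sup>2/2) / (e * alpha)\<close>. The choice of \<open>alpha\<close> makes
  \<open>exp (-alpha\<^sup>2/2) = 1 / ((K |Z|)\<^sup>d (t+d-1)\<^sup>2)\<close>, which absorbs the at most \<open>K\<^sup>d\<close> leaves.\<close>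

section \<open>Regrouping sums over repeated indices\<close>

lemma sum_collect_weights:
  fixes u :: "nat \<Rightarrow> real"
  assumes "finite B" "\<forall>l<n. p l \<in> B"
  shows "(\<Sum>b\<in>B. (\<Sum>l<n. if p l = b then u l else 0) * x b) = (\<Sum>l<n. u l * x (p l))"
proof -
  have "(\<Sum>b\<in>B. (\<Sum>l<n. if p l = b then u l else 0) * x b)
      = (\<Sum>b\<in>B. \<Sum>l<n. (if p l = b then u l * x b else 0))"
    by (auto simp: sum_distrib_right intro!: sum.cong)
  also have "\<dots> = (\<Sum>l<n. \<Sum>b\<in>B. (if p l = b then u l * x b else 0))"
    by (rule sum.swap)
  also have "\<dots> = (\<Sum>l<n. u l * x (p l))"
    using assms by (auto simp: sum.delta intro!: sum.cong)
  finally show ?thesis .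
qed

lemma quadratic_form_collect_weights:
  fixes u :: "nat \<Rightarrow> real"
  assumes "finite A" "\<forall>l<n. p l \<in> A"
  shows "(\<Sum>a\<in>A. \<Sum>b\<in>A. (\<Sum>l<n. if p l = a then u l else 0) * (\<Sum>l<n. if p l = b then u l else 0) * C a b)
    = (\<Sum>l<n. \<Sum>q<n. u l * u q * C (p l) (p q))"
proof -
  define w where "w a = (\<Sum>l<n. if p l = a then u l else 0)" for a
  have "(\<Sum>a\<in>A. \<Sum>b\<in>A. w a * w b * C a b) = (\<Sum>a\<in>A. w a * (\<Sum>b\<in>A. w b * C a b))"
    by (simp add: sum_distrib_left mult.assoc)
  also have "\<dots> = (\<Sum>a\<in>A. w a * (\<Sum>q<n. u q * C a (p q)))"
    unfolding w_def using sum_collect_weights[OF assms] by simp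
  also have "\<dots> = (\<Sum>l<n. u l * (\<Sum>q<n. u q * C (p l) (p q)))"
    unfolding w_def by (rule sum_collect_weights[OF assms])
  also have "\<dots> = (\<Sum>l<n. \<Sum>q<n. u l * u q * C (p l) (p q))"
    by (simp add: sum_distrib_left mult.assoc)
  finally show ?thesis unfolding w_def .
qed

lemma double_sum_le_mult_diagonal_sum:
  fixes C :: "'i \<Rightarrow> 'i \<Rightarrow> real"
  assumes pair: "\<forall>x\<in>A. \<forall>y\<in>A. C x y + C y x \<le> C x x + C y y"
    and p: "\<forall>l<n. p l \<in> A"
  shows "(\<Sum>l<n. \<Sum>q<n. C (p l) (p q)) \<le> real n * (\<Sum>l<n. C (p l) (p l))"
proof -
  have "0 \<le> (\<Sum>l<n. \<Sum>q<n. C (p l) (p l) + C (p q) (p q) - C (p l) (p q) - C (p q) (p l))"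
    using pair p by (intro sum_nonneg) (smt (verit) lessThan_iff)
  also have "\<dots> = 2 * (real n * (\<Sum>l<n. C (p l) (p l)))
      - (\<Sum>l<n. \<Sum>q<n. C (p l) (p q)) - (\<Sum>l<n. \<Sum>q<n. C (p q) (p l))"
    by (simp add: sum_subtractf sum.distrib sum_distrib_left)
  also have "(\<Sum>l<n. \<Sum>q<n. C (p q) (p l)) = (\<Sum>l<n. \<Sum>q<n. C (p l) (p q))"
    by (rule sum.swap)
  finally show ?thesis by simp
qed

section \<open>Regularised Gram matrices and posterior variances\<close>

lemma kernel_psd_on_points:
  fixes k :: "nat \<Rightarrow> nat \<Rightarrow> real"
  assumes k_psd: "\<forall>c :: nat \<Rightarrow> real. (\<Sum>z\<le>zmax. \<Sum>z'\<le>zmax. c z * c z' * k z z') \<ge> 0"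
    and zs: "\<forall>a<n. zs ! a \<le> zmax"
  shows "(\<Sum>a<n. \<Sum>c<n. u a * u c * k (zs ! a) (zs ! c)) \<ge> 0"
proof -
  have "(\<Sum>z\<le>zmax. \<Sum>z'\<le>zmax. (\<Sum>l<n. if zs ! l = z then u l else 0)
          * (\<Sum>l<n. if zs ! l = z' then u l else 0) * k z z')
      = (\<Sum>a<n. \<Sum>c<n. u a * u c * k (zs ! a) (zs ! c))"
    by (rule quadratic_form_collect_weights) (use zs in auto)
  with k_psd[rule_format, of "\<lambda>z. \<Sum>l<n. if zs ! l = z then u l else 0"] show ?thesis
    by simp
qed

lemma regularized_gram_quadratic_form:
  fixes k :: "nat \<Rightarrow> nat \<Rightarrow> real"
  shows "(\<Sum>a<n. u a * (\<Sum>c<n. (k (zs ! a) (zs ! c) + (if a = c then s2 else 0)) * u c))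
     = (\<Sum>a<n. \<Sum>c<n. u a * u c * k (zs ! a) (zs ! c)) + s2 * (\<Sum>a<n. (u a)\<^sup>2)"
proof -
  have "u a * (\<Sum>c<n. (k (zs ! a) (zs ! c) + (if a = c then s2 else 0)) * u c)
     = (\<Sum>c<n. u a * u c * k (zs ! a) (zs ! c)) + s2 * (u a)\<^sup>2" if "a < n" for a
  proof -
    have "u a * (\<Sum>c<n. (k (zs ! a) (zs ! c) + (if a = c then s2 else 0)) * u c)
       = (\<Sum>c<n. u a * u c * k (zs ! a) (zs ! c) + (if a = c then s2 * (u a)\<^sup>2 else 0))"
      by (auto simp: sum_distrib_left power2_eq_square algebra_simps intro!: sum.cong)
    also have "\<dots> = (\<Sum>c<n. u a * u c * k (zs ! a) (zs ! c)) + s2 * (u a)\<^sup>2"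
      using that by (simp add: sum.distrib sum.delta)
    finally show ?thesis .
  qed
  then show ?thesis by (simp add: sum.distrib sum_distrib_left)
qed

lemma det_regularized_gram_neq_0:
  fixes k :: "nat \<Rightarrow> nat \<Rightarrow> real"
  assumes s2: "s2 > 0"
    and psd: "\<And>u. (\<Sum>a<length zs. \<Sum>c<length zs. u a * u c * k (zs ! a) (zs ! c)) \<ge> 0"
  shows "det (mat (length zs) (length zs)
      (\<lambda>(a, c). k (zs ! a) (zs ! c) + (if a = c then s2 else 0))) \<noteq> 0"
proof
  define n where "n = length zs"
  define A :: "real mat"
    where "A = mat n n (\<lambda>(a, c). k (zs ! a) (zs ! c) + (if a = c then s2 else 0))"
  assume "det A = 0"
  then obtain v where v: "v \<in> carrier_vec n" "v \<noteq> 0\<^sub>v n" "A *\<^sub>v v = 0\<^sub>v n"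
    using det_0_iff_vec_prod_zero[of A n] unfolding A_def by auto
  have "(\<Sum>c<n. (k (zs ! a) (zs ! c) + (if a = c then s2 else 0)) * v $ c) = 0" if "a < n" for a
  proof -
    have "(A *\<^sub>v v) $ a = 0" using v(3) that by simp
    then show ?thesis using that v(1) unfolding A_def by (simp add: scalar_prod_def atLeast0LessThan)
  qed
  then have "(\<Sum>a<n. v $ a * (\<Sum>c<n. (k (zs ! a) (zs ! c) + (if a = c then s2 else 0)) * v $ c)) = 0"
    by simp
  then have "(\<Sum>a<n. \<Sum>c<n. v $ a * v $ c * k (zs ! a) (zs ! c)) + s2 * (\<Sum>a<n. (v $ a)\<^sup>2) = 0"
    by (simp add: regularized_gram_quadratic_form)
  moreover have "(\<Sum>a<n. \<Sum>c<n. v $ a * v $ c * k (zs ! a) (zs ! c)) \<ge> 0"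
    using psd unfolding n_def .
  moreover have "(\<Sum>a<n. (v $ a)\<^sup>2) \<ge> 0" by (simp add: sum_nonneg)
  ultimately have "(\<Sum>a<n. (v $ a)\<^sup>2) = 0"
    using s2 by (smt (verit) mult_nonneg_nonneg mult_pos_pos)
  then have "\<forall>a<n. v $ a = 0"
    by (subst (asm) sum_nonneg_eq_0_iff) auto
  then have "v = 0\<^sub>v n" using v(1) by (intro eq_vecI) auto
  with v(2) show False by simp
qed

lemma regularized_gram_invertible:
  fixes k :: "nat \<Rightarrow> nat \<Rightarrow> real"
  assumes s2: "s2 > 0"
    and psd: "\<And>u. (\<Sum>a<length zs. \<Sum>c<length zs. u a * u c * k (zs ! a) (zs ! c)) \<ge> 0"
  shows "\<exists>W. \<forall>a<length zs. \<forall>b<length zs.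
      (\<Sum>c<length zs. (k (zs ! a) (zs ! c) + (if a = c then s2 else 0)) * W c b)
        = (if a = b then 1 else 0)"
proof -
  define n where "n = length zs"
  define A :: "real mat"
    where "A = mat n n (\<lambda>(a, c). k (zs ! a) (zs ! c) + (if a = c then s2 else 0))"
  have A: "A \<in> carrier_mat n n" unfolding A_def by simp
  have "det A \<noteq> 0" unfolding A_def n_def by (rule det_regularized_gram_neq_0[OF s2 psd])
  from det_non_zero_imp_unit[OF A this, unfolded Units_def, of "()"]
  obtain B where B: "B \<in> carrier_mat n n" and AB: "A * B = 1\<^sub>m n"
    by (auto simp: ring_mat_def)
  show ?thesis
  proof (intro exI allI impI)
    fix a b assume ab: "a < length zs" "b < length zs"
    have "(A * B) $$ (a, b)
        = (\<Sum>c<length zs. (k (zs ! a) (zs ! c) + (if a = c then s2 else 0)) * B $$ (c, b))"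
      using ab A B unfolding A_def n_def by (simp add: scalar_prod_def atLeast0LessThan)
    then show "(\<Sum>c<length zs. (k (zs ! a) (zs ! c) + (if a = c then s2 else 0)) * B $$ (c, b))
        = (if a = b then 1 else 0)"
      using AB ab unfolding n_def by simp
  qed
qed

lemma gram_inv_right_inverse:
  fixes k :: "nat \<Rightarrow> nat \<Rightarrow> real"
  assumes "s2 > 0"
    and "\<And>u. (\<Sum>a<length zs. \<Sum>c<length zs. u a * u c * k (zs ! a) (zs ! c)) \<ge> 0"
    and "a < length zs" "b < length zs"
  shows "(\<Sum>c<length zs. (k (zs ! a) (zs ! c) + (if a = c then s2 else 0)) * gram_inv k s2 zs c b)
      = (if a = b then 1 else 0)"
proof -
  have "\<forall>a<length zs. \<forall>b<length zs.
      (\<Sum>c<length zs. (k (zs ! a) (zs ! c) + (if a = c then s2 else 0)) * gram_inv k s2 zs c b)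
        = (if a = b then 1 else 0)"
    unfolding gram_inv_def by (rule someI_ex[OF regularized_gram_invertible[OF assms(1,2)]])
  then show ?thesis using assms(3,4) by blast
qed

lemma right_inverse_mult_apply:
  fixes A W :: "nat \<Rightarrow> nat \<Rightarrow> real"
  assumes inv: "\<And>a b. a < n \<Longrightarrow> b < n \<Longrightarrow> (\<Sum>c<n. A a c * W c b) = (if a = b then 1 else 0)"
    and a: "a < n"
  shows "(\<Sum>c<n. A a c * (\<Sum>b<n. W c b * v b)) = v a"
proof -
  have "(\<Sum>c<n. A a c * (\<Sum>b<n. W c b * v b)) = (\<Sum>c<n. \<Sum>b<n. A a c * W c b * v b)"
    by (simp add: sum_distrib_left mult.assoc)
  also have "\<dots> = (\<Sum>b<n. (\<Sum>c<n. A a c * W c b) * v b)"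
    by (subst sum.swap) (simp add: sum_distrib_right)
  also have "\<dots> = (\<Sum>b<n. if a = b then v b else 0)"
    using inv a by (intro sum.cong) auto
  also have "\<dots> = v a" using a by simp
  finally show ?thesis .
qed

text \<open>With \<open>u = W v\<close> for \<open>v a = k (zs ! a) z\<close>, the subtracted term of \<open>post_cov\<close> equals
  \<open>u\<^sup>T (G + s2 I) u \<ge> 0\<close>, where \<open>G\<close> is the Gram matrix.\<close>

lemma post_cov_diag_le:
  fixes k :: "nat \<Rightarrow> nat \<Rightarrow> real"
  assumes s2: "s2 > 0"
    and k_sym: "\<forall>z\<le>zmax. \<forall>z'\<le>zmax. k z z' = k z' z"
    and k_psd: "\<forall>c :: nat \<Rightarrow> real. (\<Sum>z\<le>zmax. \<Sum>z'\<le>zmax. c z * c z' * k z z') \<ge> 0"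
    and obs: "\<forall>p\<in>set obs. fst p \<le> zmax"
    and z: "z \<le> zmax"
  shows "post_cov k s2 obs z z \<le> k z z"
proof -
  define zs where "zs = map fst obs"
  define n where "n = length obs"
  define W where "W = gram_inv k s2 zs"
  define A where "A a c = k (zs ! a) (zs ! c) + (if a = c then s2 else 0)" for a c
  define v where "v a = k (zs ! a) z" for a
  define u where "u c = (\<Sum>b<n. W c b * v b)" for c
  have zs_le: "\<forall>a<n. zs ! a \<le> zmax" using obs by (auto simp: zs_def n_def)
  have len: "length zs = n" by (simp add: zs_def n_def)
  have psd: "(\<Sum>a<length zs. \<Sum>c<length zs. w a * w c * k (zs ! a) (zs ! c)) \<ge> 0" for w
    using kernel_psd_on_points[OF k_psd zs_le] unfolding len .
  have inv: "(\<Sum>c<n. A a c * W c b) = (if a = b then 1 else 0)" if "a < n" "b < n" for a b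
    using gram_inv_right_inverse[OF s2 psd, of a b] that unfolding A_def W_def len by simp
  have Au: "(\<Sum>c<n. A a c * u c) = v a" if "a < n" for a
    unfolding u_def using inv that by (rule right_inverse_mult_apply)
  have "(\<Sum>a<n. \<Sum>b<n. k z (zs ! a) * W a b * k (zs ! b) z) = (\<Sum>a<n. v a * u a)"
    unfolding u_def v_def using k_sym zs_le z
    by (auto simp: sum_distrib_left mult.assoc intro!: sum.cong)
  also have "\<dots> = (\<Sum>a<n. u a * (\<Sum>c<n. A a c * u c))"
    using Au by (auto intro!: sum.cong)
  also have "\<dots> = (\<Sum>a<n. \<Sum>c<n. u a * u c * k (zs ! a) (zs ! c)) + s2 * (\<Sum>a<n. (u a)\<^sup>2)"
    unfolding A_def by (rule regularized_gram_quadratic_form)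
  also have "\<dots> \<ge> 0"
    using kernel_psd_on_points[OF k_psd zs_le, of u] s2 by (simp add: sum_nonneg)
  finally show ?thesis
    unfolding post_cov_def Let_def zs_def[symmetric] n_def[symmetric] W_def[symmetric] by simp
qed

section \<open>Gaussian random variables\<close>

lemma gaussian_rv_integral:
  assumes P: "prob_space P" and X: "gaussian_rv P X m v"
  shows "integrable P X \<and> (\<integral>\<omega>. X \<omega> \<partial>P) = m"
proof (cases "v = 0")
  case True
  interpret prob_space P by fact
  have AE: "AE \<omega> in P. X \<omega> = m" and meas: "X \<in> borel_measurable P"
    using X True unfolding gaussian_rv_def by auto
  have "integrable P X" using integrable_cong_AE[OF meas _ AE] by simp
  moreover have "(\<integral>\<omega>. X \<omega> \<partial>P) = (\<integral>\<omega>. m \<partial>P)" by (rule integral_cong_AE[OF meas _ AE]) simp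
  ultimately show ?thesis by (simp add: prob_space)
next
  case False
  interpret prob_space P by fact
  have v: "v > 0" using X False unfolding gaussian_rv_def by auto
  have D: "distributed P lborel X (\<lambda>x. ennreal (normal_density m (sqrt v) x))"
    using X False unfolding gaussian_rv_def by auto
  have "integrable P X"
    using distributed_integrable_var[OF D] integrable_normal_moment_nz_1[of "sqrt v" m] v by simp
  moreover have "expectation X = m" using normal_distributed_expectation[of "sqrt v" X m] D v by simp
  ultimately show ?thesis by simp
qed

lemma max_zero_le_exp_div:
  fixes y l :: real
  assumes "l > 0"
  shows "max 0 y \<le> exp (l * y - 1) / l"
proof -
  have "l * y \<le> exp (l * y - 1)" using exp_ge_add_one_self[of "l * y - 1"] by simp
  then show ?thesis using assms by (simp add: field_simps)
qed

lemma normal_density_mult_exp: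
  assumes "\<sigma> > 0"
  shows "normal_density m \<sigma> x * exp (\<alpha> / \<sigma> * (x - m)) = exp (\<alpha>\<^sup>2 / 2) * normal_density (m + \<alpha> * \<sigma>) \<sigma> x"
proof -
  have "-(x - m)\<^sup>2 / (2 * \<sigma>\<^sup>2) + \<alpha> / \<sigma> * (x - m) = \<alpha>\<^sup>2 / 2 + (-(x - (m + \<alpha> * \<sigma>))\<^sup>2 / (2 * \<sigma>\<^sup>2))"
    using assms by (simp add: field_simps power2_eq_square)
  then have "exp (-(x - m)\<^sup>2 / (2 * \<sigma>\<^sup>2)) * exp (\<alpha> / \<sigma> * (x - m))
      = exp (\<alpha>\<^sup>2 / 2) * exp (-(x - (m + \<alpha> * \<sigma>))\<^sup>2 / (2 * \<sigma>\<^sup>2))"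
    by (simp add: exp_add[symmetric])
  then show ?thesis unfolding normal_density_def by (simp add: algebra_simps)
qed

text \<open>Exponential tilting: bounding \<open>y\<^sup>+\<close> by \<open>exp (\<alpha> y / \<sigma> - 1) \<sigma> / \<alpha>\<close> turns the normal
  density into a multiple of the normal density shifted by \<open>\<alpha> \<sigma>\<close>.\<close>

lemma normal_density_excess_le:
  assumes \<sigma>: "\<sigma> > 0" and \<alpha>: "\<alpha> > 0"
  shows "normal_density m \<sigma> x * max 0 (x - (m + \<alpha> * \<sigma>))
    \<le> \<sigma> * exp (-(\<alpha>\<^sup>2) / 2) / (exp 1 * \<alpha>) * normal_density (m + \<alpha> * \<sigma>) \<sigma> x"
proof -
  define c where "c = \<sigma> * exp (-(\<alpha>\<^sup>2)) / (exp 1 * \<alpha>)"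
  have "max 0 (x - (m + \<alpha> * \<sigma>)) \<le> exp (\<alpha> / \<sigma> * (x - (m + \<alpha> * \<sigma>)) - 1) / (\<alpha> / \<sigma>)"
    by (rule max_zero_le_exp_div) (use \<sigma> \<alpha> in simp)
  also have "\<alpha> / \<sigma> * (x - (m + \<alpha> * \<sigma>)) - 1 = \<alpha> / \<sigma> * (x - m) + (-(\<alpha>\<^sup>2) - 1)"
    using \<sigma> by (simp add: field_simps power2_eq_square)
  also have "exp (\<alpha> / \<sigma> * (x - m) + (-(\<alpha>\<^sup>2) - 1)) / (\<alpha> / \<sigma>) = exp (\<alpha> / \<sigma> * (x - m)) * c"
    unfolding c_def exp_add exp_diff using \<sigma> \<alpha> by (simp add: field_simps)
  finally have "normal_density m \<sigma> x * max 0 (x - (m + \<alpha> * \<sigma>))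
      \<le> normal_density m \<sigma> x * exp (\<alpha> / \<sigma> * (x - m)) * c"
    by (metis mult_left_mono normal_density_nonneg mult.assoc)
  also have "\<dots> = exp (\<alpha>\<^sup>2 / 2) * c * normal_density (m + \<alpha> * \<sigma>) \<sigma> x"
    unfolding normal_density_mult_exp[OF \<sigma>] by (simp add: mult_ac)
  also have "exp (\<alpha>\<^sup>2 / 2) * c = \<sigma> * exp (-(\<alpha>\<^sup>2) / 2) / (exp 1 * \<alpha>)"
    unfolding c_def by (simp add: exp_add[symmetric])
  finally show ?thesis .
qed

lemma normal_density_excess_integral:
  assumes \<sigma>: "\<sigma> > 0" and \<alpha>: "\<alpha> > 0"
  shows "integrable lborel (\<lambda>x. normal_density m \<sigma> x * max 0 (x - (m + \<alpha> * \<sigma>)))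
    \<and> (\<integral>x. normal_density m \<sigma> x * max 0 (x - (m + \<alpha> * \<sigma>)) \<partial>lborel)
      \<le> \<sigma> * exp (-(\<alpha>\<^sup>2) / 2) / (exp 1 * \<alpha>)"
proof -
  define c where "c = \<sigma> * exp (-(\<alpha>\<^sup>2) / 2) / (exp 1 * \<alpha>)"
  define f where "f x = normal_density m \<sigma> x * max 0 (x - (m + \<alpha> * \<sigma>))" for x
  have bound: "f x \<le> c * normal_density (m + \<alpha> * \<sigma>) \<sigma> x" for x
    unfolding f_def c_def by (rule normal_density_excess_le[OF \<sigma> \<alpha>])
  have int_bound: "integrable lborel (\<lambda>x. c * normal_density (m + \<alpha> * \<sigma>) \<sigma> x)" using \<sigma> by simp
  have int: "integrable lborel f"
  proof (rule Bochner_Integration.integrable_bound[OF int_bound])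
    show "f \<in> borel_measurable lborel" unfolding f_def by measurable
    show "AE x in lborel. norm (f x) \<le> norm (c * normal_density (m + \<alpha> * \<sigma>) \<sigma> x)"
      using order_trans[OF bound abs_ge_self] by (intro AE_I2) (simp add: f_def)
  qed
  have "integral\<^sup>L lborel f \<le> (\<integral>x. c * normal_density (m + \<alpha> * \<sigma>) \<sigma> x \<partial>lborel)"
    by (rule Bochner_Integration.integral_mono[OF int int_bound bound])
  also have "\<dots> = c" using \<sigma> by simp
  finally show ?thesis using int unfolding f_def c_def by simp
qed

lemma gaussian_rv_excess_integral:
  assumes P: "prob_space P" and X: "gaussian_rv P X m v" and \<alpha>: "\<alpha> > 0"
  shows "integrable P (\<lambda>\<omega>. max 0 (X \<omega> - (m + \<alpha> * sqrt v)))
    \<and> (\<integral>\<omega>. max 0 (X \<omega> - (m + \<alpha> * sqrt v)) \<partial>P) \<le> sqrt v * exp (-(\<alpha>\<^sup>2) / 2) / (exp 1 * \<alpha>)"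
proof (cases "v = 0")
  case True
  interpret prob_space P by fact
  have "X \<in> borel_measurable P" using X unfolding gaussian_rv_def by blast
  then have meas: "(\<lambda>\<omega>. max 0 (X \<omega> - (m + \<alpha> * sqrt v))) \<in> borel_measurable P"
    by measurable
  have AE: "AE \<omega> in P. max 0 (X \<omega> - (m + \<alpha> * sqrt v)) = 0"
    using X True unfolding gaussian_rv_def by auto
  have "integrable P (\<lambda>\<omega>. max 0 (X \<omega> - (m + \<alpha> * sqrt v)))"
    using integrable_cong_AE[OF meas _ AE] by simp
  moreover have "(\<integral>\<omega>. max 0 (X \<omega> - (m + \<alpha> * sqrt v)) \<partial>P) = (\<integral>\<omega>. 0 \<partial>P)"
    by (rule integral_cong_AE[OF meas _ AE]) simp
  ultimately show ?thesis using True by simp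
next
  case False
  define \<sigma> where "\<sigma> = sqrt v"
  define g where "g x = max 0 (x - (m + \<alpha> * \<sigma>))" for x :: real
  have \<sigma>: "\<sigma> > 0" using X False unfolding gaussian_rv_def \<sigma>_def by auto
  have D: "distributed P lborel X (\<lambda>x. ennreal (normal_density m \<sigma> x))"
    using X False unfolding gaussian_rv_def \<sigma>_def by auto
  have g: "g \<in> borel_measurable lborel" unfolding g_def by measurable
  have "integrable P (\<lambda>\<omega>. g (X \<omega>))
      \<and> (\<integral>\<omega>. g (X \<omega>) \<partial>P) \<le> \<sigma> * exp (-(\<alpha>\<^sup>2) / 2) / (exp 1 * \<alpha>)"
    using normal_density_excess_integral[OF \<sigma> \<alpha>, of m]
      distributed_integrable[OF D g] distributed_integral[OF D g]
    unfolding g_def by simp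
  then show ?thesis unfolding g_def \<sigma>_def .
qed

lemma gaussian_family_combination:
  fixes n :: nat and u :: "nat \<Rightarrow> real"
  assumes F: "gaussian_family P A F m C" and p: "\<forall>l<n. p l \<in> A"
  shows "gaussian_rv P (\<lambda>\<omega>. \<Sum>l<n. u l * F (p l) \<omega>) (\<Sum>l<n. u l * m (p l))
           (\<Sum>l<n. \<Sum>q<n. u l * u q * C (p l) (p q))"
proof -
  define w where "w a = (\<Sum>l<n. if p l = a then u l else 0)" for a
  have A: "finite A" using F unfolding gaussian_family_def by blast
  have "gaussian_rv P (\<lambda>\<omega>. \<Sum>a\<in>A. w a * F a \<omega>) (\<Sum>a\<in>A. w a * m a) (\<Sum>a\<in>A. \<Sum>b\<in>A. w a * w b * C a b)"
    using F unfolding gaussian_family_def by blast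
  moreover have "(\<lambda>\<omega>. \<Sum>a\<in>A. w a * F a \<omega>) = (\<lambda>\<omega>. \<Sum>l<n. u l * F (p l) \<omega>)"
    unfolding w_def using sum_collect_weights[OF A p] by simp
  ultimately show ?thesis
    unfolding w_def sum_collect_weights[OF A p] quadratic_form_collect_weights[OF A p] by simp
qed

lemma gaussian_family_cov_pair:
  assumes F: "gaussian_family P A F m C" and "x \<in> A" "y \<in> A"
  shows "C x y + C y x \<le> C x x + C y y"
proof -
  let ?p = "\<lambda>l::nat. if l = 0 then x else y"
  let ?u = "\<lambda>l::nat. if l = 0 then (1::real) else -1"
  have "gaussian_rv P (\<lambda>\<omega>. \<Sum>l<2. ?u l * F (?p l) \<omega>) (\<Sum>l<2. ?u l * m (?p l))
          (\<Sum>l<2. \<Sum>q<2. ?u l * ?u q * C (?p l) (?p q))"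
    by (rule gaussian_family_combination[OF F]) (use assms in auto)
  then have "0 \<le> (\<Sum>l<2. \<Sum>q<2. ?u l * ?u q * C (?p l) (?p q))"
    unfolding gaussian_rv_def by blast
  then show ?thesis by (simp add: numeral_2_eq_2)
qed

lemma Max_minus_le_sum_excess:
  fixes x b :: "'i \<Rightarrow> real"
  assumes L: "finite L" "I \<in> L" and b: "\<And>i. i \<in> L \<Longrightarrow> b i \<le> b I"
  shows "Max (x ` L) - x I \<le> (\<Sum>i\<in>L. max 0 (x i - b i)) + (b I - x I)"
proof -
  have "Max (x ` L) \<in> x ` L" using L by (intro Max_in) auto
  then obtain i where i: "i \<in> L" "Max (x ` L) = x i" by auto
  have "max 0 (x i - b i) \<le> (\<Sum>j\<in>L. max 0 (x j - b j))"
    by (rule member_le_sum[OF i(1) _ L(1)]) simp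
  then show ?thesis unfolding i(2) using b[OF i(1)] by linarith
qed

lemma expected_max_gap_of_ucb_choice:
  assumes P: "prob_space P" and L: "finite L" "I \<in> L" and \<alpha>: "\<alpha> > 0"
    and X: "\<And>i. i \<in> L \<Longrightarrow> gaussian_rv P (X i) (m i) (v i)"
    and I_max: "\<And>i. i \<in> L \<Longrightarrow> m i + \<alpha> * sqrt (v i) \<le> m I + \<alpha> * sqrt (v I)"
  shows "integrable P (\<lambda>\<omega>. Max ((\<lambda>i. X i \<omega>) ` L) - X I \<omega>)
    \<and> (\<integral>\<omega>. Max ((\<lambda>i. X i \<omega>) ` L) - X I \<omega> \<partial>P)
      \<le> (\<Sum>i\<in>L. sqrt (v i)) * exp (-(\<alpha>\<^sup>2) / 2) / (exp 1 * \<alpha>) + \<alpha> * sqrt (v I)"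
proof -
  interpret prob_space P by fact
  define E where "E = exp (-(\<alpha>\<^sup>2) / 2) / (exp 1 * \<alpha>)"
  define ucb where "ucb i = m i + \<alpha> * sqrt (v i)" for i
  define excess where "excess i \<omega> = max 0 (X i \<omega> - ucb i)" for i \<omega>
  define gap where "gap \<omega> = Max ((\<lambda>i. X i \<omega>) ` L) - X I \<omega>" for \<omega>
  define G where "G \<omega> = (\<Sum>i\<in>L. excess i \<omega>) + (ucb I - X I \<omega>)" for \<omega>
  have excess: "integrable P (excess i) \<and> integral\<^sup>L P (excess i) \<le> sqrt (v i) * E" if "i \<in> L" for i
    using gaussian_rv_excess_integral[OF P X[OF that] \<alpha>] unfolding excess_def ucb_def E_def by simp
  have XI: "integrable P (X I) \<and> integral\<^sup>L P (X I) = m I"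
    using gaussian_rv_integral[OF P X[OF L(2)]] by simp
  have int_excess: "integrable P (\<lambda>\<omega>. \<Sum>i\<in>L. excess i \<omega>)"
    using excess by (intro Bochner_Integration.integrable_sum) auto
  have int_ucb: "integrable P (\<lambda>\<omega>. ucb I - X I \<omega>)"
    using XI by (intro Bochner_Integration.integrable_diff) auto
  have int_G: "integrable P G"
    unfolding G_def using int_excess int_ucb by (rule Bochner_Integration.integrable_add)
  have gap_le_G: "gap \<omega> \<le> G \<omega>" for \<omega>
    unfolding gap_def G_def excess_def
    by (rule Max_minus_le_sum_excess[OF L]) (simp add: ucb_def I_max)
  have gap_nonneg: "0 \<le> gap \<omega>" for \<omega> unfolding gap_def using L by simp
  have "X i \<in> borel_measurable P" if "i \<in> L" for i using X[OF that] unfolding gaussian_rv_def by blast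
  then have gap_meas: "gap \<in> borel_measurable P" unfolding gap_def using L by measurable
  have int_gap: "integrable P gap"
    using gap_le_G gap_nonneg
    by (intro Bochner_Integration.integrable_bound[OF int_G gap_meas] AE_I2) (smt (verit) real_norm_def)
  have "integral\<^sup>L P gap \<le> integral\<^sup>L P G"
    by (rule integral_mono[OF int_gap int_G gap_le_G])
  also have "integral\<^sup>L P G = (\<Sum>i\<in>L. integral\<^sup>L P (excess i)) + \<alpha> * sqrt (v I)"
    unfolding G_def using int_excess int_ucb excess XI
    by (simp add: Bochner_Integration.integral_sum Bochner_Integration.integral_diff ucb_def prob_space)
  also have "(\<Sum>i\<in>L. integral\<^sup>L P (excess i)) \<le> (\<Sum>i\<in>L. sqrt (v i) * E)"
    using excess by (intro sum_mono) auto
  finally show ?thesis using int_gap unfolding gap_def E_def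
    by (simp add: sum_distrib_right sum_divide_distrib)
qed

lemma state_at_le:
  assumes "\<forall>j<K. Z1 j \<le> zmax" "j < K"
  shows "state_at zmax Z1 J n j \<le> zmax"
  using assms by (cases n) (auto simp: upd_def)

lemma length_zseq [simp]: "length (zseq zmax Z js) = length js"
  by (induction js arbitrary: Z) auto

lemma zseq_le:
  assumes "\<forall>j<K. Z j \<le> zmax" "set js \<subseteq> {..<K}" "l < length js"
  shows "zseq zmax Z js ! l \<le> zmax"
  using assms
proof (induction js arbitrary: Z l)
  case (Cons j js)
  then show ?case by (cases l) (auto simp: upd_def)
qed simp

lemma leaf_point_in_range:
  assumes "\<forall>j<K. Z1 j \<le> zmax" "set js \<subseteq> {..<K}" "l < length js"
  shows "(js ! l, zseq zmax (state_at zmax Z1 J n) js ! l) \<in> {..<K} \<times> {..zmax}"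
  using assms zseq_le[of K "state_at zmax Z1 J n" zmax js l] state_at_le[OF assms(1)]
  by (auto simp: subset_iff nth_mem)

lemma obs_of_le:
  assumes "\<forall>j<K. Z1 j \<le> zmax" "j < K"
  shows "\<forall>p\<in>set (obs_of zmax Z1 J Y j t). fst p \<le> zmax"
  unfolding obs_of_def using state_at_le[OF assms] by auto

lemma finite_leaves: "finite (leaves sp K d)"
  by (rule finite_subset[OF _ finite_lists_length_eq[of "{..<K}" d]]) (auto simp: leaves_def)

lemma card_leaves_le: "card (leaves sp K d) \<le> K ^ d"
proof -
  have "card (leaves sp K d) \<le> card {xs. set xs \<subseteq> {..<K} \<and> length xs = d}"
    by (rule card_mono[OF finite_lists_length_eq]) (auto simp: leaves_def)
  then show ?thesis by (simp add: card_lists_length_eq)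
qed

lemma leaves_one_arm: "leaves sp 1 d \<subseteq> {replicate d 0}"
  unfolding leaves_def by (auto intro: replicate_length_same[symmetric])

section \<open>The posterior of the leaf values\<close>

lemma leaf_value_gaussian:
  assumes posterior: "gaussian_family P ({..<K} \<times> {..zmax}) F
          (\<lambda>(j, z). post_mean k s2 (obs_of zmax Z1 J Y j t) z)
          (\<lambda>(j, z) (j', z'). if j = j' then post_cov k s2 (obs_of zmax Z1 J Y j t) z z' else 0)"
    and Z1_range: "\<forall>j<K. Z1 j \<le> zmax"
    and js: "set js \<subseteq> {..<K}"
  shows "gaussian_rv P (\<lambda>\<omega>. leaf_value zmax (\<lambda>j z. F (j, z) \<omega>) (state_at zmax Z1 J (t - 1)) js)
           (eta k s2 zmax Z1 J Y t js) (varsig2 k s2 zmax Z1 J Y t js)"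
  using gaussian_family_combination[OF posterior, of "length js"
      "\<lambda>l. (js ! l, zseq zmax (state_at zmax Z1 J (t - 1)) js ! l)" "\<lambda>_. 1"]
    leaf_point_in_range[OF Z1_range js]
  unfolding leaf_value_def eta_def varsig2_def Let_def
  by (simp cong: if_cong) \<comment> \<open>\<open>if_weak_cong\<close> would leave \<open>t - 1\<close> unnormalised in the branches\<close>

lemma varsig2_le_square:
  fixes k :: "nat \<Rightarrow> nat \<Rightarrow> real"
  assumes posterior: "gaussian_family P ({..<K} \<times> {..zmax}) F
          (\<lambda>(j, z). post_mean k s2 (obs_of zmax Z1 J Y j t) z)
          (\<lambda>(j, z) (j', z'). if j = j' then post_cov k s2 (obs_of zmax Z1 J Y j t) z z' else 0)"
    and s2: "s2 > 0"
    and k_sym: "\<forall>z\<le>zmax. \<forall>z'\<le>zmax. k z z' = k z' z"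
    and k_psd: "\<forall>c :: nat \<Rightarrow> real. (\<Sum>z\<le>zmax. \<Sum>z'\<le>zmax. c z * c z' * k z z') \<ge> 0"
    and k_diag: "\<forall>z\<le>zmax. k z z \<le> 1"
    and Z1_range: "\<forall>j<K. Z1 j \<le> zmax"
    and js: "set js \<subseteq> {..<K}"
  shows "varsig2 k s2 zmax Z1 J Y t js \<le> (real (length js))\<^sup>2"
proof -
  let ?n = "length js"
  let ?p = "\<lambda>l. (js ! l, zseq zmax (state_at zmax Z1 J (t - 1)) js ! l)"
  define C where "C = (\<lambda>(j, z) (j', z').
      if j = j' then post_cov k s2 (obs_of zmax Z1 J Y j t) z z' else (0::real))"
  have p: "\<forall>l<?n. ?p l \<in> {..<K} \<times> {..zmax}" using leaf_point_in_range[OF Z1_range js] by blast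
  have "varsig2 k s2 zmax Z1 J Y t js = (\<Sum>l<?n. \<Sum>q<?n. C (?p l) (?p q))"
    unfolding varsig2_def Let_def C_def by (simp cong: if_cong)
  also have "\<dots> \<le> real ?n * (\<Sum>l<?n. C (?p l) (?p l))"
    using gaussian_family_cov_pair[OF posterior[folded C_def]]
    by (intro double_sum_le_mult_diagonal_sum[OF _ p]) blast
  also have "\<dots> \<le> real ?n * (\<Sum>l<?n. 1)"
  proof (intro mult_left_mono sum_mono)
    fix l assume "l \<in> {..<?n}"
    then have j: "js ! l < K" and z: "zseq zmax (state_at zmax Z1 J (t - 1)) js ! l \<le> zmax"
      using p by auto
    have "post_cov k s2 (obs_of zmax Z1 J Y (js ! l) t) (zseq zmax (state_at zmax Z1 J (t - 1)) js ! l)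
        (zseq zmax (state_at zmax Z1 J (t - 1)) js ! l) \<le> 1"
      using order_trans[OF post_cov_diag_le[OF s2 k_sym k_psd obs_of_le[OF Z1_range j] z]
          k_diag[rule_format, OF z]] by simp
    then show "C (?p l) (?p l) \<le> 1" unfolding C_def by simp
  qed simp
  finally show ?thesis by (simp add: power2_eq_square)
qed

lemma sum_sqrt_varsig2_le:
  fixes k :: "nat \<Rightarrow> nat \<Rightarrow> real"
  assumes posterior: "gaussian_family P ({..<K} \<times> {..zmax}) F
          (\<lambda>(j, z). post_mean k s2 (obs_of zmax Z1 J Y j t) z)
          (\<lambda>(j, z) (j', z'). if j = j' then post_cov k s2 (obs_of zmax Z1 J Y j t) z z' else 0)"
    and s2: "s2 > 0"
    and k_sym: "\<forall>z\<le>zmax. \<forall>z'\<le>zmax. k z z' = k z' z"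
    and k_psd: "\<forall>c :: nat \<Rightarrow> real. (\<Sum>z\<le>zmax. \<Sum>z'\<le>zmax. c z * c z' * k z z') \<ge> 0"
    and k_diag: "\<forall>z\<le>zmax. k z z \<le> 1"
    and Z1_range: "\<forall>j<K. Z1 j \<le> zmax"
  shows "(\<Sum>js\<in>leaves sp K d. sqrt (varsig2 k s2 zmax Z1 J Y t js)) \<le> real (K ^ d) * real d"
proof -
  have "sqrt (varsig2 k s2 zmax Z1 J Y t js) \<le> real d" if "js \<in> leaves sp K d" for js
    using that varsig2_le_square[OF posterior s2 k_sym k_psd k_diag Z1_range, of js]
    by (intro real_le_lsqrt) (auto simp: leaves_def)
  then have "(\<Sum>js\<in>leaves sp K d. sqrt (varsig2 k s2 zmax Z1 J Y t js))
      \<le> real (card (leaves sp K d)) * real d"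
    by (rule sum_bounded_above)
  also have "\<dots> \<le> real (K ^ d) * real d"
    using card_leaves_le by (intro mult_right_mono) auto
  finally show ?thesis .
qed

section \<open>The confidence parameter\<close>

definition alpha_count :: "nat \<Rightarrow> nat \<Rightarrow> nat \<Rightarrow> nat \<Rightarrow> nat" where
  "alpha_count K zmax d t = (K * (zmax + 1)) ^ d * (t + d - 1)\<^sup>2"

lemma alpha_eq_sqrt_ln: "alpha K zmax d t = sqrt (2 * ln (real (alpha_count K zmax d t)))"
  by (simp add: alpha_def alpha_count_def)

lemma alpha_nonneg: "0 \<le> alpha K zmax d t"
proof -
  have "0 \<le> ln (real n)" for n :: nat by (cases n) auto
  then show ?thesis unfolding alpha_eq_sqrt_ln by simp
qed

lemma exp_neg_half_alpha_sq:
  assumes "K \<ge> 1" "t + d \<ge> 2"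
  shows "exp (-(alpha K zmax d t)\<^sup>2 / 2) = 1 / real (alpha_count K zmax d t)"
proof -
  have "0 < alpha_count K zmax d t" using assms by (simp add: alpha_count_def)
  then have pos: "0 < real (alpha_count K zmax d t)" by simp
  then have "0 \<le> ln (real (alpha_count K zmax d t))" by simp
  with pos show ?thesis unfolding alpha_eq_sqrt_ln by (simp add: exp_minus inverse_eq_divide)
qed

lemma sqrt_le_alpha:
  assumes K: "K \<ge> 2" and t: "t + d \<ge> 2"
  shows "sqrt (real d) \<le> alpha K zmax d t"
proof -
  have "1 \<le> (t + d - 1)\<^sup>2" using t by simp
  then have "(K * (zmax + 1)) ^ d \<le> alpha_count K zmax d t"
    unfolding alpha_count_def by (metis mult.right_neutral mult_le_mono2)
  moreover have "2 ^ d \<le> (K * (zmax + 1)) ^ d" using K by (intro power_mono) auto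
  ultimately have "real (2 ^ d) \<le> real (alpha_count K zmax d t)" by (simp only: of_nat_le_iff)
  then have "ln (2 ^ d) \<le> ln (real (alpha_count K zmax d t))" by (intro ln_mono) auto
  moreover have "real d * (2 / 3) \<le> real d * ln 2"
    by (rule mult_left_mono) (use ln2_ge_two_thirds in auto)
  ultimately show ?thesis unfolding alpha_eq_sqrt_ln
    by (intro real_sqrt_le_mono) (simp add: ln_realpow)
qed

text \<open>Since \<open>alpha_count \<ge> K\<^sup>d (t+d-1)\<^sup>2\<close>, the factor \<open>exp (-\<alpha>\<^sup>2/2)\<close> absorbs the leaf count
  \<open>K\<^sup>d\<close>, and \<open>\<alpha> \<ge> sqrt d\<close> leaves \<open>d / (e \<alpha>) \<le> sqrt d\<close>.\<close>

lemma alpha_tail_bound: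
  fixes K zmax d t :: nat
  assumes K: "K \<ge> 2" and d: "d \<ge> 1" and t: "t \<ge> 1"
  defines "\<alpha> \<equiv> alpha K zmax d t"
  shows "\<alpha> > 0 \<and> real (K ^ d) * real d * exp (-(\<alpha>\<^sup>2) / 2) / (exp 1 * \<alpha>)
           \<le> sqrt (2 * real d * pi) / real ((t + d - 1)\<^sup>2)"
proof -
  define T where "T = real ((t + d - 1)\<^sup>2)"
  have T: "T \<ge> 1" using d t unfolding T_def by simp
  have td: "t + d \<ge> 2" using d t by simp
  with K have \<alpha>_ge: "sqrt (real d) \<le> \<alpha>" unfolding \<alpha>_def by (rule sqrt_le_alpha)
  have \<alpha>_pos: "\<alpha> > 0" using \<alpha>_ge d by (smt (verit) real_sqrt_ge_one of_nat_1 of_nat_le_iff)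
  have "K ^ d * (t + d - 1)\<^sup>2 \<le> alpha_count K zmax d t"
    unfolding alpha_count_def by (intro mult_right_mono power_mono) auto
  then have count: "real (K ^ d) * T \<le> real (alpha_count K zmax d t)"
    unfolding T_def by (metis of_nat_le_iff of_nat_mult)
  have "0 < real (K ^ d) * T" using K T by (intro mult_pos_pos) auto
  then have count_pos: "0 < real (alpha_count K zmax d t)" using count by linarith
  have exp_eq: "exp (-(\<alpha>\<^sup>2) / 2) = 1 / real (alpha_count K zmax d t)"
    unfolding \<alpha>_def using K td by (intro exp_neg_half_alpha_sq) auto
  have "real d * 1 \<le> real d * (2 * pi)" using pi_gt3 by (intro mult_left_mono) auto
  then have sqrt_le: "sqrt (real d) \<le> sqrt (2 * real d * pi)"
    by (intro real_sqrt_le_mono) (simp add: mult_ac)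
  have "real d = sqrt (real d) * sqrt (real d)" by simp
  also have "\<dots> \<le> sqrt (real d) * (exp 1 * \<alpha>)"
    using \<alpha>_ge \<alpha>_pos by (intro mult_left_mono) (auto intro: order_trans[of _ \<alpha>])
  also have "\<dots> \<le> sqrt (2 * real d * pi) * (exp 1 * \<alpha>)"
    using sqrt_le \<alpha>_pos by (intro mult_right_mono) auto
  finally have "real d / (exp 1 * \<alpha>) / T \<le> sqrt (2 * real d * pi) / T"
    using \<alpha>_pos T by (intro divide_right_mono) (auto simp: divide_le_eq)
  moreover have "real (K ^ d) * real d * exp (-(\<alpha>\<^sup>2) / 2) / (exp 1 * \<alpha>)
      \<le> real d / (exp 1 * \<alpha>) / T"
    unfolding exp_eq using mult_right_mono[OF count, of "real d"] count_pos T \<alpha>_pos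
    by (simp add: field_simps mult_ac)
  ultimately show ?thesis using \<alpha>_pos unfolding T_def by auto
qed

theorem mainTheorem9:
  fixes K zmax d t :: nat
    and sp :: bool
    and k :: "nat \<Rightarrow> nat \<Rightarrow> real"
    and s2 :: real
    and Z1 :: "nat \<Rightarrow> nat"
    and J :: "nat \<Rightarrow> nat"
    and Y :: "nat \<Rightarrow> real"
    and I :: "nat list"
    and P :: "'a measure"
    and F :: "nat \<times> nat \<Rightarrow> 'a \<Rightarrow> real"
  assumes K_pos: "K \<ge> 1"
    and d_pos: "d \<ge> 1"
    and single_d: "sp \<longrightarrow> d \<le> K"
    and s2_pos: "s2 > 0"
    and k_sym: "\<forall>z\<le>zmax. \<forall>z'\<le>zmax. k z z' = k z' z"
    and k_psd: "\<forall>c :: nat \<Rightarrow> real. (\<Sum>z\<le>zmax. \<Sum>z'\<le>zmax. c z * c z' * k z z') \<ge> 0"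
    and k_diag: "\<forall>z\<le>zmax. k z z \<le> 1"
    and Z1_range: "\<forall>j<K. Z1 j \<le> zmax"
    and block_start: "\<exists>m. t = m * d + 1"
    and past_blocks: "\<forall>m. m * d + 1 < t \<longrightarrow>
          map (\<lambda>l. J (m * d + 1 + l)) [0..<d] \<in> leaves sp K d \<and>
          (\<forall>i \<in> leaves sp K d.
             ucb k s2 K zmax d Z1 J Y (m * d + 1) i
               \<le> ucb k s2 K zmax d Z1 J Y (m * d + 1) (map (\<lambda>l. J (m * d + 1 + l)) [0..<d]))"
    and I_leaf: "I \<in> leaves sp K d"
    and I_max: "\<forall>i \<in> leaves sp K d. ucb k s2 K zmax d Z1 J Y t i \<le> ucb k s2 K zmax d Z1 J Y t I"
    and P_prob: "prob_space P"
    and posterior: "gaussian_family P ({..<K} \<times> {..zmax}) F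
          (\<lambda>(j, z). post_mean k s2 (obs_of zmax Z1 J Y j t) z)
          (\<lambda>(j, z) (j', z'). if j = j' then post_cov k s2 (obs_of zmax Z1 J Y j t) z z' else 0)"
  shows "integrable P (\<lambda>\<omega>.
            best_value zmax (leaves sp K d) (\<lambda>j z. F (j, z) \<omega>) (state_at zmax Z1 J (t - 1))
          - leaf_value zmax (\<lambda>j z. F (j, z) \<omega>) (state_at zmax Z1 J (t - 1)) I)
      \<and> (\<integral>\<omega>. best_value zmax (leaves sp K d) (\<lambda>j z. F (j, z) \<omega>) (state_at zmax Z1 J (t - 1))
            - leaf_value zmax (\<lambda>j z. F (j, z) \<omega>) (state_at zmax Z1 J (t - 1)) I \<partial>P)
        \<le> sqrt (2 * real d * pi) / real ((t + d - 1) ^ 2)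
           + alpha K zmax d t * sqrt (varsig2 k s2 zmax Z1 J Y t I)"
proof -
  let ?L = "leaves sp K d" and ?v = "varsig2 k s2 zmax Z1 J Y t" and ?\<alpha> = "alpha K zmax d t"
  have gauss: "gaussian_rv P (\<lambda>\<omega>. leaf_value zmax (\<lambda>j z. F (j, z) \<omega>) (state_at zmax Z1 J (t - 1)) js)
      (eta k s2 zmax Z1 J Y t js) (?v js)" if "js \<in> ?L" for js
    using that leaf_value_gaussian[OF posterior Z1_range] by (simp add: leaves_def)
  show ?thesis
  proof (cases "K = 1")
    case True \<comment> \<open>a single leaf, so the gap vanishes; here \<open>alpha\<close> may be \<open>0\<close>\<close>
    then have "?L = {I}" using leaves_one_arm[of sp d] I_leaf by auto
    moreover have "0 \<le> ?v I" using gauss[OF I_leaf] by (simp add: gaussian_rv_def)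
    ultimately show ?thesis using alpha_nonneg by (simp add: best_value_def)
  next
    case False
    have "K \<ge> 2" and "t \<ge> 1" using False K_pos block_start by auto
    then obtain \<alpha>_pos: "?\<alpha> > 0" and tail: "real (K ^ d) * real d * exp (-?\<alpha>\<^sup>2 / 2) / (exp 1 * ?\<alpha>)
        \<le> sqrt (2 * real d * pi) / real ((t + d - 1)\<^sup>2)"
      using alpha_tail_bound[of K d t zmax] d_pos by blast
    have "(\<Sum>js\<in>?L. sqrt (?v js)) * exp (-?\<alpha>\<^sup>2 / 2) / (exp 1 * ?\<alpha>)
        \<le> sqrt (2 * real d * pi) / real ((t + d - 1)\<^sup>2)"
      using sum_sqrt_varsig2_le[OF posterior s2_pos k_sym k_psd k_diag Z1_range] \<alpha>_pos
      by (intro order_trans[OF _ tail] divide_right_mono mult_right_mono) auto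
    moreover have "eta k s2 zmax Z1 J Y t js + ?\<alpha> * sqrt (?v js) \<le> eta k s2 zmax Z1 J Y t I + ?\<alpha> * sqrt (?v I)"
      if "js \<in> ?L" for js
      using I_max that unfolding ucb_def by blast
    note gap = expected_max_gap_of_ucb_choice[where m = "eta k s2 zmax Z1 J Y t" and v = ?v,
        OF P_prob finite_leaves I_leaf \<alpha>_pos gauss this]
    ultimately show ?thesis unfolding best_value_def
      using conjunct1[OF gap] order_trans[OF conjunct2[OF gap] add_right_mono] by simp
  qed
qed

end
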